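(* Let $\mathcal A$ be an ordered normed algebra with unit $e$ whose algebra cone $\mathcal A^+$ is normal with normality constant $\alpha$. Let $a,b\in\mathcal A$, with at least one of $a$ and $b$ positive, and suppose that for some $\varepsilon>0$ there exists $x\in\mathcal A$ with $\|x\|\leq\varepsilon$ such that $ab-ba\geq e+x$. Then $$\|a\|\cdot\|b\|\geq \frac{1}{2\alpha}\ln\frac{1}{\alpha\varepsilon}.$$ In particular, if the norm on $\mathcal A$ is monotone, then $\|a\|\cdot\|b\|\geq \frac12\ln\frac1\varepsilon$.
   Context: A normed algebra $\mathcal A$ (real or complex, with submultiplicative norm) with unit $e$. A cone is a nonempty subset $\mathcal A^+\subseteq\mathcal A$ with $\mathcal A^++\mathcal A^+\subseteq\mathcal A^+$, $\lambda\mathcal A^+\subseteq\mathcal A^+$ for all $\lambda\geq 0$, and $\mathcal A^+\cap(-\mathcal A^+)=\{0\}$; it induces the partial order $a\leq b \iff b-a\in\mathcal A^+$. Elements of $\mathcal A^+$ are called positive. The cone is an algebra cone if $\mathcal A^+\cdot\mathcal A^+\subseteq\mathcal A^+$ and $e\in\mathcal A^+$; then $\mathcal A$ is called an ordered normed algebra. The cone is normal with normality constant $\alpha$ (necessarily $\alpha\ge 1$) if $0\leq x\leq y$ implies $\|x\|\leq\alpha\|y\|$. The norm is monotone if one can take $\alpha=1$. *)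

theory Defs
  imports Complex_Main
begin

text \<open>A unital (real) normed algebra is modelled by the type class
  {real_normed_algebra, real_algebra_1}: submultiplicative norm, unit 1 with 1 \<noteq> 0,
  but the norm of the unit is NOT required to be 1. Complex normed algebras are
  in particular real normed algebras.\<close>

definition cone :: "'a::real_vector set \<Rightarrow> bool" where
  "cone C \<longleftrightarrow> C \<noteq> {} \<and> (\<forall>x\<in>C. \<forall>y\<in>C. x + y \<in> C)
     \<and> (\<forall>l::real. l \<ge> 0 \<longrightarrow> (\<forall>x\<in>C. l *\<^sub>R x \<in> C))
     \<and> C \<inter> uminus ` C = {0}"

definition algebra_cone :: "'a::real_algebra_1 set \<Rightarrow> bool" where
  "algebra_cone C \<longleftrightarrow> cone C \<and> (\<forall>x\<in>C. \<forall>y\<in>C. x * y \<in> C) \<and> 1 \<in> C"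

definition cone_le :: "'a::real_vector set \<Rightarrow> 'a \<Rightarrow> 'a \<Rightarrow> bool" where
  "cone_le C a b \<longleftrightarrow> b - a \<in> C"

definition normal_cone :: "'a::real_normed_vector set \<Rightarrow> real \<Rightarrow> bool" where
  "normal_cone C \<alpha> \<longleftrightarrow> (\<forall>x y. cone_le C 0 x \<and> cone_le C x y \<longrightarrow> norm x \<le> \<alpha> * norm y)"

end

theory Submission
  imports Defs
begin

text \<open>If \<open>p \<ge> 0\<close> and \<open>pq - qp \<ge> 1 + x\<close>, then writing \<open>p^(n+1) q - q p^(n+1)\<close> as
  \<open>\<Sum>k\<le>n. p^k (pq - qp) p^(n-k)\<close> shows that it dominates \<open>(n+1) p^n + \<Sum>k\<le>n. p^k x p^(n-k)\<close>,
  and normality turns this into the recurrence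
  \<open>(n+1) \<parallel>p^n\<parallel> \<le> \<alpha> (2 \<parallel>p^(n+1)\<parallel> \<parallel>q\<parallel> + (n+1) \<epsilon> \<parallel>p\<parallel>^n)\<close>.
  Weighted by \<open>(2 \<alpha> \<parallel>q\<parallel>)^n / n!\<close> it telescopes; since the weighted norms tend to 0, the error
  terms, which sum to at most \<open>\<alpha> \<epsilon> exp (2 \<alpha> \<parallel>p\<parallel> \<parallel>q\<parallel>)\<close>, must exceed \<open>\<parallel>1\<parallel> \<ge> 1\<close>.
  If \<open>b\<close> rather than \<open>a\<close> is positive, take \<open>p = b\<close> and \<open>q = -a\<close>.\<close>

lemma exp_series_partial_sum_le:
  fixes M :: real
  assumes "0 \<le> M"
  shows "(\<Sum>k<n. M ^ k / fact k) \<le> exp M"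
proof -
  have summable: "summable (\<lambda>k. M ^ k / fact k)"
    using summable_exp[of M] by (simp add: divide_inverse mult.commute)
  have "(\<Sum>k<n. M ^ k / fact k) \<le> (\<Sum>k. M ^ k / fact k)"
    using summable assms by (intro sum_le_suminf) auto
  also have "\<dots> = exp M"
    using exp_converges[of M, THEN sums_unique] by (simp add: divide_inverse mult.commute)
  finally show ?thesis .
qed

lemma one_le_mult_exp_of_telescoping:
  fixes d :: "nat \<Rightarrow> real" and c M :: real
  assumes "0 \<le> c" "0 \<le> M" "1 \<le> d 0"
    and step: "\<And>n. d n \<le> d (Suc n) + c * (M ^ n / fact n)"
    and upper: "\<And>n. d (Suc n) \<le> M ^ Suc n / fact (Suc n)"
  shows "1 \<le> c * exp M"
proof -
  have telescoped: "d 0 - c * (\<Sum>k<n. M ^ k / fact k) \<le> d n" for n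
  proof (induction n)
    case (Suc n)
    then show ?case using step[of n] by (simp add: algebra_simps)
  qed simp
  have below_terms: "1 - c * exp M \<le> M ^ Suc n / fact (Suc n)" for n
  proof -
    have "c * (\<Sum>k<Suc n. M ^ k / fact k) \<le> c * exp M"
      using exp_series_partial_sum_le[OF \<open>0 \<le> M\<close>] \<open>0 \<le> c\<close> by (intro mult_left_mono)
    then show ?thesis using telescoped[of "Suc n"] \<open>1 \<le> d 0\<close> upper[of n] by linarith
  qed
  have "(\<lambda>n. M ^ Suc n / fact (Suc n)) \<longlonglongrightarrow> 0"
    using summable_LIMSEQ_zero[OF summable_exp[of M]]
    by (intro LIMSEQ_Suc) (simp add: divide_inverse mult.commute)
  then have "1 - c * exp M \<le> 0"
    using below_terms by (intro tendsto_lowerbound[where F = sequentially]) (auto intro: always_eventually)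
  then show ?thesis by simp
qed

lemma ln_le_of_power_norm_recurrence:
  fixes f :: "nat \<Rightarrow> real" and \<alpha> \<epsilon> u B :: real
  assumes "0 < \<alpha>" "0 < \<epsilon>" "0 \<le> u" "0 \<le> B"
    and recurrence: "\<And>n. real (Suc n) * f n \<le> \<alpha> * (2 * f (Suc n) * B + real (Suc n) * \<epsilon> * u ^ n)"
    and "1 \<le> f 0"
    and upper: "\<And>n. f (Suc n) \<le> u ^ Suc n"
  shows "ln (1 / (\<alpha> * \<epsilon>)) \<le> 2 * \<alpha> * (u * B)"
proof -
  define K where "K = 2 * \<alpha> * B"
  define d where "d n = f n * K ^ n / fact n" for n
  have "0 \<le> K" using assms by (simp add: K_def)
  have "1 \<le> (\<alpha> * \<epsilon>) * exp (K * u)"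
  proof (rule one_le_mult_exp_of_telescoping[where d = d])
    show "0 \<le> \<alpha> * \<epsilon>" "0 \<le> K * u" using assms \<open>0 \<le> K\<close> by auto
    show "1 \<le> d 0" using \<open>1 \<le> f 0\<close> by (simp add: d_def)
    show "d n \<le> d (Suc n) + \<alpha> * \<epsilon> * ((K * u) ^ n / fact n)" for n
    proof -
      have "real (Suc n) * f n * (K ^ n / fact (Suc n)) \<le>
          \<alpha> * (2 * f (Suc n) * B + real (Suc n) * \<epsilon> * u ^ n) * (K ^ n / fact (Suc n))"
        using recurrence[of n] \<open>0 \<le> K\<close> by (intro mult_right_mono) auto
      moreover have "real (Suc n) * f n * (K ^ n / fact (Suc n)) = d n"
        unfolding d_def by (simp add: fact_Suc field_simps del: of_nat_Suc)
      moreover have "\<alpha> * (2 * f (Suc n) * B + real (Suc n) * \<epsilon> * u ^ n) * (K ^ n / fact (Suc n))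
          = d (Suc n) + \<alpha> * \<epsilon> * ((K * u) ^ n / fact n)"
        unfolding d_def K_def by (simp add: fact_Suc field_simps power_mult_distrib del: of_nat_Suc)
      ultimately show ?thesis by simp
    qed
    show "d (Suc n) \<le> (K * u) ^ Suc n / fact (Suc n)" for n
    proof -
      have "f (Suc n) * K ^ Suc n \<le> u ^ Suc n * K ^ Suc n"
        using upper[of n] \<open>0 \<le> K\<close> by (intro mult_right_mono) auto
      moreover have "(K * u) ^ Suc n = u ^ Suc n * K ^ Suc n"
        by (simp only: power_mult_distrib mult.commute)
      ultimately show ?thesis
        unfolding d_def by (simp only:) (rule divide_right_mono, simp_all)
    qed
  qed
  then have "1 / (\<alpha> * \<epsilon>) \<le> exp (K * u)"
    using assms by (simp add: field_simps)
  then have "ln (1 / (\<alpha> * \<epsilon>)) \<le> ln (exp (K * u))"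
    using assms by (subst ln_le_cancel_iff) auto
  then show ?thesis by (simp add: K_def algebra_simps)
qed

lemma
  fixes C :: "'a::real_algebra_1 set"
  assumes "algebra_cone C"
  shows algebra_cone_zero: "0 \<in> C"
    and algebra_cone_add: "\<And>x y. x \<in> C \<Longrightarrow> y \<in> C \<Longrightarrow> x + y \<in> C"
    and algebra_cone_scaleR: "\<And>l x. 0 \<le> l \<Longrightarrow> x \<in> C \<Longrightarrow> l *\<^sub>R x \<in> C"
    and algebra_cone_mult: "\<And>x y. x \<in> C \<Longrightarrow> y \<in> C \<Longrightarrow> x * y \<in> C"
    and algebra_cone_one: "1 \<in> C"
  using assms unfolding algebra_cone_def cone_def by auto

lemma algebra_cone_sum:
  fixes C :: "'a::real_algebra_1 set"
  assumes "algebra_cone C" "\<And>k. k \<in> A \<Longrightarrow> g k \<in> C"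
  shows "sum g A \<in> C"
  using assms(2)
  by (induction A rule: infinite_finite_induct)
    (simp_all add: algebra_cone_zero[OF assms(1)] algebra_cone_add[OF assms(1)])

lemma algebra_cone_power:
  fixes C :: "'a::real_algebra_1 set"
  assumes "algebra_cone C" "p \<in> C"
  shows "p ^ n \<in> C"
  by (induction n) (auto intro: algebra_cone_mult[OF assms(1)] algebra_cone_one[OF assms(1)] assms(2))

lemma norm_one_ge_1: "1 \<le> norm (1::'a::{real_normed_algebra, real_algebra_1})"
proof -
  have "norm (1::'a) * 1 \<le> norm (1::'a) * norm (1::'a)"
    using norm_mult_ineq[of "1::'a" 1] by simp
  then show ?thesis by simp
qed

lemma normal_cone_const_ge_1:
  fixes C :: "'a::{real_normed_algebra, real_algebra_1} set"
  assumes "algebra_cone C" "normal_cone C \<alpha>"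
  shows "1 \<le> \<alpha>"
proof -
  have "cone_le C 0 (1::'a)" "cone_le C 1 (1::'a)"
    using algebra_cone_zero[OF assms(1)] algebra_cone_one[OF assms(1)] by (simp_all add: cone_le_def)
  then have "norm (1::'a) \<le> \<alpha> * norm (1::'a)"
    using assms(2) unfolding normal_cone_def by blast
  then show ?thesis
    using norm_one_ge_1[where 'a = 'a] by simp
qed

lemma norm_power_mult_le:
  fixes p y :: "'a::{real_normed_algebra, real_algebra_1}"
  shows "norm (p ^ k * y) \<le> norm p ^ k * norm y"
proof (induction k)
  case (Suc k)
  have "norm (p ^ Suc k * y) \<le> norm p * norm (p ^ k * y)"
    using norm_mult_ineq[of p "p ^ k * y"] by (simp add: mult.assoc)
  also have "\<dots> \<le> norm p ^ Suc k * norm y"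
    using Suc by (simp add: mult.assoc mult_left_mono)
  finally show ?case .
qed simp

lemma norm_mult_power_le:
  fixes p y :: "'a::{real_normed_algebra, real_algebra_1}"
  shows "norm (y * p ^ k) \<le> norm y * norm p ^ k"
proof (induction k)
  case (Suc k)
  have "norm (y * p ^ Suc k) \<le> norm (y * p ^ k) * norm p"
    using norm_mult_ineq[of "y * p ^ k" p] by (simp add: mult.assoc power_commutes)
  also have "\<dots> \<le> norm y * norm p ^ k * norm p"
    using Suc by (intro mult_right_mono) auto
  finally show ?case by (simp add: power_commutes mult.assoc)
qed simp

lemma norm_sum_power_sandwich_le:
  fixes p y :: "'a::{real_normed_algebra, real_algebra_1}"
  shows "norm (\<Sum>k<Suc n. p ^ k * y * p ^ (n - k)) \<le> real (Suc n) * norm y * norm p ^ n"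
proof -
  have "norm (p ^ k * y * p ^ (n - k)) \<le> norm y * norm p ^ n" if "k < Suc n" for k
  proof -
    have "norm (p ^ k * y * p ^ (n - k)) \<le> (norm p ^ k * norm y) * norm p ^ (n - k)"
      using norm_mult_power_le[of "p ^ k * y"] norm_power_mult_le[of p k y]
      by (meson mult_right_mono order.trans zero_le_power norm_ge_zero)
    also have "\<dots> = norm y * norm p ^ n"
      using that by (simp add: mult_ac power_add[symmetric])
    finally show ?thesis .
  qed
  then have "norm (\<Sum>k<Suc n. p ^ k * y * p ^ (n - k)) \<le> (\<Sum>k<Suc n. norm y * norm p ^ n)"
    by (intro order.trans[OF norm_sum] sum_mono) auto
  then show ?thesis by simp
qed

lemma norm_commutator_le:
  fixes p q :: "'a::real_normed_algebra"
  shows "norm (p * q - q * p) \<le> 2 * norm p * norm q"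
proof -
  have "norm (q * p) \<le> norm p * norm q"
    using norm_mult_ineq[of q p] by (simp add: mult.commute)
  then show ?thesis
    using norm_triangle_ineq4[of "p * q" "q * p"] norm_mult_ineq[of p q] by linarith
qed

lemma commutator_power_eq_sum:
  fixes p q :: "'a::ring_1"
  shows "p ^ Suc n * q - q * p ^ Suc n = (\<Sum>k<Suc n. p ^ k * (p * q - q * p) * p ^ (n - k))"
proof (induction n)
  case (Suc n)
  have "(\<Sum>k<Suc (Suc n). p ^ k * (p * q - q * p) * p ^ (Suc n - k))
      = (p * q - q * p) * p ^ Suc n + (\<Sum>k<Suc n. p ^ Suc k * (p * q - q * p) * p ^ (n - k))"
    by (subst sum.lessThan_Suc_shift) simp
  also have "(\<Sum>k<Suc n. p ^ Suc k * (p * q - q * p) * p ^ (n - k))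
      = p * (\<Sum>k<Suc n. p ^ k * (p * q - q * p) * p ^ (n - k))"
    by (simp only: sum_distrib_left mult.assoc power_Suc)
  also have "\<dots> = p * (p ^ Suc n * q - q * p ^ Suc n)"
    using Suc by simp
  finally show ?case
    by (simp add: algebra_simps power_Suc2[symmetric] del: power_Suc) (simp add: mult.assoc[symmetric])
qed simp

lemma cone_le_commutator_power:
  fixes C :: "'a::real_algebra_1 set"
  assumes "algebra_cone C" "p \<in> C" "cone_le C (1 + x) (p * q - q * p)"
  shows "cone_le C (real (Suc n) *\<^sub>R p ^ n)
           (p ^ Suc n * q - q * p ^ Suc n - (\<Sum>k<Suc n. p ^ k * x * p ^ (n - k)))"
proof -
  let ?w = "p * q - q * p"
  have "(\<Sum>k<Suc n. p ^ k * p ^ (n - k)) = real (Suc n) *\<^sub>R p ^ n"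
    by (simp add: power_add[symmetric] scaleR_conv_of_real)
  then have "p ^ Suc n * q - q * p ^ Suc n - (\<Sum>k<Suc n. p ^ k * x * p ^ (n - k))
        - real (Suc n) *\<^sub>R p ^ n
      = (\<Sum>k<Suc n. p ^ k * ?w * p ^ (n - k)) - (\<Sum>k<Suc n. p ^ k * x * p ^ (n - k))
        - (\<Sum>k<Suc n. p ^ k * p ^ (n - k))"
    by (simp only: commutator_power_eq_sum)
  also have "\<dots> = (\<Sum>k<Suc n. p ^ k * (?w - (1 + x)) * p ^ (n - k))"
    by (simp add: algebra_simps sum_subtractf sum.distrib)
  also have "\<dots> \<in> C"
    using assms by (intro algebra_cone_sum algebra_cone_mult algebra_cone_power)
      (auto simp: cone_le_def)
  finally show ?thesis by (simp add: cone_le_def)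
qed

lemma norm_power_recurrence:
  fixes C :: "'a::{real_normed_algebra, real_algebra_1} set"
  assumes "algebra_cone C" "normal_cone C \<alpha>" "p \<in> C"
    and "norm x \<le> \<epsilon>" "cone_le C (1 + x) (p * q - q * p)"
  shows "real (Suc n) * norm (p ^ n)
           \<le> \<alpha> * (2 * norm (p ^ Suc n) * norm q + real (Suc n) * \<epsilon> * norm p ^ n)"
proof -
  let ?Y = "\<Sum>k<Suc n. p ^ k * x * p ^ (n - k)"
  have "cone_le C 0 (real (Suc n) *\<^sub>R p ^ n)"
    using algebra_cone_scaleR[OF assms(1) _ algebra_cone_power[OF assms(1,3)]] by (simp add: cone_le_def)
  then have "norm (real (Suc n) *\<^sub>R p ^ n) \<le> \<alpha> * norm (p ^ Suc n * q - q * p ^ Suc n - ?Y)"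
    using assms(2) cone_le_commutator_power[OF assms(1,3,5)] unfolding normal_cone_def by blast
  then have "real (Suc n) * norm (p ^ n) \<le> \<alpha> * norm (p ^ Suc n * q - q * p ^ Suc n - ?Y)"
    by simp
  also have "\<dots> \<le> \<alpha> * (2 * norm (p ^ Suc n) * norm q + real (Suc n) * \<epsilon> * norm p ^ n)"
  proof (rule mult_left_mono)
    have "norm (p ^ Suc n * q - q * p ^ Suc n) \<le> 2 * norm (p ^ Suc n) * norm q"
      by (rule norm_commutator_le)
    moreover have "norm ?Y \<le> real (Suc n) * \<epsilon> * norm p ^ n"
      using norm_sum_power_sandwich_le[of p x n] assms(4)
      by (meson mult_left_mono mult_right_mono of_nat_0_le_iff order.trans zero_le_power norm_ge_zero)
    ultimately show "norm (p ^ Suc n * q - q * p ^ Suc n - ?Y)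
        \<le> 2 * norm (p ^ Suc n) * norm q + real (Suc n) * \<epsilon> * norm p ^ n"
      using norm_triangle_ineq4[of "p ^ Suc n * q - q * p ^ Suc n" ?Y] by linarith
    show "0 \<le> \<alpha>" using normal_cone_const_ge_1[OF assms(1,2)] by simp
  qed
  finally show ?thesis .
qed

lemma ln_le_norm_mult_of_commutator:
  fixes C :: "'a::{real_normed_algebra, real_algebra_1} set"
  assumes "algebra_cone C" "normal_cone C \<alpha>" "p \<in> C"
    and "0 < \<epsilon>" "norm x \<le> \<epsilon>" "cone_le C (1 + x) (p * q - q * p)"
  shows "ln (1 / (\<alpha> * \<epsilon>)) \<le> 2 * \<alpha> * (norm p * norm q)"
proof (rule ln_le_of_power_norm_recurrence[where f = "\<lambda>n. norm (p ^ n)"])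
  show "0 < \<alpha>" using normal_cone_const_ge_1[OF assms(1,2)] by simp
  show "1 \<le> norm (p ^ 0)" using norm_one_ge_1 by simp
  show "norm (p ^ Suc n) \<le> norm p ^ Suc n" for n
    using norm_power_mult_le[of p n p] by (simp add: power_commutes)
  show "real (Suc n) * norm (p ^ n)
      \<le> \<alpha> * (2 * norm (p ^ Suc n) * norm q + real (Suc n) * \<epsilon> * norm p ^ n)" for n
    using norm_power_recurrence[OF assms(1-3,5,6)] .
qed (use assms in auto)

theorem theorem2p4:
  fixes C :: "'a::{real_normed_algebra, real_algebra_1} set"
    and \<alpha> \<epsilon> :: real and a b x :: 'a
  assumes "algebra_cone C"
    and "normal_cone C \<alpha>"
    and "a \<in> C \<or> b \<in> C"
    and "\<epsilon> > 0"
    and "norm x \<le> \<epsilon>"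
    and "cone_le C (1 + x) (a * b - b * a)"
  shows "norm a * norm b \<ge> 1 / (2 * \<alpha>) * ln (1 / (\<alpha> * \<epsilon>)) \<and>
         (normal_cone C 1 \<longrightarrow> norm a * norm b \<ge> 1 / 2 * ln (1 / \<epsilon>))"
proof -
  have bound: "ln (1 / (\<beta> * \<epsilon>)) \<le> 2 * \<beta> * (norm a * norm b)" if "normal_cone C \<beta>" for \<beta>
  proof (cases "a \<in> C")
    case True
    then show ?thesis using ln_le_norm_mult_of_commutator assms that by blast
  next
    case False
    then have "b \<in> C" using assms(3) by blast
    moreover have "cone_le C (1 + x) (b * - a - - a * b)"
      using assms(6) by (simp add: algebra_simps)
    ultimately have "ln (1 / (\<beta> * \<epsilon>)) \<le> 2 * \<beta> * (norm b * norm (- a))"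
      using ln_le_norm_mult_of_commutator[OF assms(1) that _ assms(4,5)] by blast
    then show ?thesis by (simp add: mult.commute)
  qed
  have "0 < \<alpha>" using normal_cone_const_ge_1[OF assms(1,2)] by simp
  then show ?thesis using bound[OF assms(2)] bound[of 1] by (simp add: field_simps)
qed

end
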